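(* Let $n$ be odd with $n\mid(q+1)$, let $m$ be a positive even integer, $b$ a positive integer with $\gcd(b,n)=1$, and $\delta$ an odd integer with $3\le\delta\le\frac{n-m+1}{2}$. Put $$A=\{\alpha^{jb}: -\tfrac{m}{2}\le j\le \tfrac{m-2}{2}\}\cup\{\alpha^{\frac{n-1}{2}b}\},\qquad B=\{\alpha^{jb}:-\tfrac{\delta-3}{2}\le j\le\tfrac{\delta-1}{2}\},$$ and let $d_A^{\perp}$ be the minimum distance of the dual of the cyclic code of length $n$ over $\mathbb{F}_{q^2}$ with complete defining set $A$. Then $C_{AB}$ is a cyclic $(d_A^{\perp}-\delta+1,\delta)$-LRC over $\mathbb{F}_q$ with dimension $n-m-2\delta+3$. If moreover $\delta-2<n-m-d_A^{\perp}$, then $C_{AB}$ is optimal and has minimum distance $m+\delta-1$.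
   Context: Let $q$ be a prime power and $n\mid(q+1)$, so the set $R_n$ of all $n$-th roots of unity lies in $\mathbb{F}_{q^2}$; let $\alpha\in\mathbb{F}_{q^2}$ be a primitive $n$-th root of unity. For $A,B\subseteq R_n$, $AB=\{\beta\gamma:\beta\in A,\gamma\in B\}$. For $Z\subseteq R_n$, the cyclic code of length $n$ over $\mathbb{F}_{q^2}$ with complete defining set $Z$ is the ideal generated by $\prod_{\beta\in Z}(x-\beta)$ in $\mathbb{F}_{q^2}[x]/(x^n-1)$; if $\{j:\alpha^j\in Z\}$ is closed under $j\mapsto-j\bmod n$ (a union of $q$-cyclotomic cosets), $C_Z$ denotes the cyclic code of length $n$ over $\mathbb{F}_q$ generated by this polynomial, which lies in $\mathbb{F}_q[x]$. Locality: for a linear code $C\subseteq\mathbb{F}_q^n$ and integers $r\ge1$, $\delta\ge2$, the $i$-th coordinate has $(r,\delta)$-locality if there is $S_i\subseteq\{1,\dots,n\}$ with $i\in S_i$, $|S_i|\le r+\delta-1$ such that the punctured code $C|_{S_i}$ has minimum distance at least $\delta$; $C$ is an $(r,\delta)$-LRC if every coordinate has $(r,\delta)$-locality. An $[n,k,d]$ $(r,\delta)$-LRC is optimal if $d=n-k-(\lceil k/r\rceil-1)(\delta-1)+1$ (always an upper bound on $d$). *)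

theory Defs
  imports "HOL-Computational_Algebra.Polynomial" "HOL-Computational_Algebra.Primes" Complex_Main
begin

(* Words of length n are polynomials c with coeff c i = 0 for i >= n;
   coordinate i of the word is coeff c i (i = 0..n-1). *)
definition word_len :: "nat \<Rightarrow> 'a::zero poly \<Rightarrow> bool" where
  "word_len n c \<longleftrightarrow> (\<forall>i\<ge>n. coeff c i = 0)"

definition hweight :: "nat \<Rightarrow> 'a::zero poly \<Rightarrow> nat" where
  "hweight n c = card {i. i < n \<and> coeff c i \<noteq> 0}"

definition min_dist :: "nat \<Rightarrow> 'a::zero poly set \<Rightarrow> nat" where
  "min_dist n C = Min {hweight n c | c. c \<in> C \<and> c \<noteq> 0}"

(* the subfield F_q of a field of order q^2 *)
definition Fq :: "nat \<Rightarrow> 'a::field set" where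
  "Fq q = {x. x ^ q = x}"

definition gen_poly :: "'a::field set \<Rightarrow> 'a poly" where
  "gen_poly Z = (\<Prod>\<beta>\<in>Z. [:-\<beta>, 1:])"

definition cyclic_code :: "nat \<Rightarrow> 'a::field set \<Rightarrow> 'a poly set" where
  "cyclic_code n Z = {(f * gen_poly Z) mod (monom 1 n - 1) | f. True}"

definition cyclic_code_Fq :: "nat \<Rightarrow> nat \<Rightarrow> 'a::field set \<Rightarrow> 'a poly set" where
  "cyclic_code_Fq q n Z =
     {(f * gen_poly Z) mod (monom 1 n - 1) | f. \<forall>i. coeff f i \<in> Fq q}"

definition dual_code :: "nat \<Rightarrow> 'a::field poly set \<Rightarrow> 'a poly set" where
  "dual_code n C = {v. word_len n v \<and> (\<forall>c\<in>C. (\<Sum>i<n. coeff c i * coeff v i) = 0)}"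

definition code_dim :: "nat \<Rightarrow> 'a poly set \<Rightarrow> nat" where
  "code_dim q C = (THE k. card C = q ^ k)"

definition punct_min_dist_ge :: "nat set \<Rightarrow> 'a::zero poly set \<Rightarrow> nat \<Rightarrow> bool" where
  "punct_min_dist_ge S C \<delta> \<longleftrightarrow>
     (\<forall>c\<in>C. (\<exists>i\<in>S. coeff c i \<noteq> 0) \<longrightarrow> card {i\<in>S. coeff c i \<noteq> 0} \<ge> \<delta>)"

definition has_locality :: "nat \<Rightarrow> 'a::zero poly set \<Rightarrow> int \<Rightarrow> nat \<Rightarrow> nat \<Rightarrow> bool" where
  "has_locality n C r \<delta> i \<longleftrightarrow>
     (\<exists>S. S \<subseteq> {..<n} \<and> i \<in> S \<and> int (card S) \<le> r + int \<delta> - 1 \<and> punct_min_dist_ge S C \<delta>)"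

definition is_LRC :: "nat \<Rightarrow> 'a::zero poly set \<Rightarrow> int \<Rightarrow> nat \<Rightarrow> bool" where
  "is_LRC n C r \<delta> \<longleftrightarrow> r \<ge> 1 \<and> \<delta> \<ge> 2 \<and> (\<forall>i<n. has_locality n C r \<delta> i)"

(* Singleton-like bound attained *)
definition optimal_LRC :: "int \<Rightarrow> int \<Rightarrow> int \<Rightarrow> int \<Rightarrow> int \<Rightarrow> bool" where
  "optimal_LRC n k d r \<delta> \<longleftrightarrow> d = n - k - (\<lceil>real_of_int k / real_of_int r\<rceil> - 1) * (\<delta> - 1) + 1"

definition set_prod :: "'a::times set \<Rightarrow> 'a set \<Rightarrow> 'a set" where
  "set_prod A B = {x * y | x y. x \<in> A \<and> y \<in> B}"

end

theory Submission
  imports Defs "HOL-Number_Theory.Residues"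
begin

text \<open>Write \<open>m = 2M\<close>, \<open>\<delta> = 2D + 1\<close>, \<open>n = 2N + 1\<close> and \<open>\<zeta> j = (\<alpha>\<^sup>b)\<^sup>j\<close>, a primitive \<open>n\<close>-th
  root of unity. Then \<open>AB = \<zeta> ` (J1 \<union> J2)\<close> for a window \<open>J1\<close> of \<open>m + \<delta> - 2\<close> consecutive
  exponents around \<open>0\<close> and a window \<open>J2\<close> of \<open>\<delta> - 1\<close> exponents around \<open>n/2\<close>. This set is
  closed under inversion, which on \<open>n\<close>-th roots of unity is \<open>z \<mapsto> z\<^sup>q\<close> since \<open>n\<close> divides
  \<open>q + 1\<close>; hence \<open>C\<^sub>A\<^sub>B\<close> is the subfield subcode of the cyclic code over the field of
  order \<open>q\<^sup>2\<close> and has dimension \<open>n - |AB|\<close>. The BCH bound on \<open>J1\<close> gives weight at least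
  \<open>m + \<delta> - 1\<close>.

  Locality: if \<open>v\<close> is a word of the dual of \<open>C\<^sub>A\<close> and \<open>x \<in> C\<^sub>A\<^sub>B\<close>, the componentwise
  product of \<open>x\<close> and \<open>v\<close> vanishes on the \<open>\<delta> - 1\<close> consecutive roots in \<open>B\<close>, so by the BCH
  bound \<open>x\<close> restricted to the support of \<open>v\<close> is zero or has weight at least \<open>\<delta>\<close>. Taking
  \<open>v\<close> of minimum weight and its cyclic shifts gives repair sets of size \<open>d\<^sub>A\<^sup>\<bottom>\<close>
  through every coordinate. For optimality, pigeonhole on \<open>k - 1\<close> coordinates containing all
  but \<open>\<delta> - 1\<close> points of the support of \<open>v\<close> yields a nonzero codeword that vanishes on the
  whole support, and hence has weight at most \<open>m + \<delta> - 1\<close>; with \<open>\<lceil>k/r\<rceil> = 2\<close> this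
  meets the Singleton-like bound.\<close>

hide_const (open) UnivPoly.up_ring.coeff UnivPoly.up_ring.monom

section \<open>Finite fields and the Frobenius map\<close>

lemma prime_CHAR_finite_field: "prime CHAR('a::{field,finite})"
  by (simp add: prime_CHAR_semidom finite_imp_CHAR_pos)

lemma CHAR_eq_if_card_eq_prime_power:
  assumes "prime p" "j > 0" "card (UNIV :: 'a::{field,finite} set) = p ^ j"
  shows "CHAR('a) = p"
proof -
  have "CHAR('a) dvd p ^ j" using CHAR_dvd_CARD[where 'a='a] assms(3) by simp
  hence "CHAR('a) dvd p" using prime_CHAR_finite_field prime_dvd_power by blast
  thus ?thesis using prime_CHAR_finite_field[where 'a='a] assms(1) by (simp add: primes_dvd_imp_eq)
qed

lemma power_card_UNIV_minus_1:
  fixes x :: "'a::{field,finite}"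
  assumes "x \<noteq> 0"
  shows "x ^ (card (UNIV :: 'a set) - 1) = 1"
proof -
  define G where "G = \<lparr>carrier = UNIV - {0 :: 'a}, monoid.mult = (*), one = (1 :: 'a)\<rparr>"
  interpret group G
  proof (rule groupI)
    fix y assume "y \<in> carrier G"
    thus "\<exists>z\<in>carrier G. z \<otimes>\<^bsub>G\<^esub> y = \<one>\<^bsub>G\<^esub>"
      by (intro bexI[of _ "inverse y"]) (simp_all add: G_def)
  qed (simp_all add: G_def mult.assoc)
  have pow: "x [^]\<^bsub>G\<^esub> j = x ^ j" for j
    by (induction j) (simp_all add: G_def)
  have "x \<in> carrier G" using assms by (simp add: G_def)
  hence "x [^]\<^bsub>G\<^esub> order G = \<one>\<^bsub>G\<^esub>" by (rule pow_order_eq_1)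
  moreover have "order G = card (UNIV :: 'a set) - 1"
    by (simp add: G_def order_def card_Diff_singleton)
  ultimately have "x ^ (card (UNIV :: 'a set) - 1) = \<one>\<^bsub>G\<^esub>" by (simp only: pow)
  thus ?thesis by (simp add: G_def)
qed

lemma power_card_UNIV_eq_self:
  fixes x :: "'a::{field,finite}"
  shows "x ^ card (UNIV :: 'a set) = x"
proof (cases "x = 0")
  case False
  have "card (UNIV :: 'a set) = Suc (card (UNIV :: 'a set) - 1)"
    using finite_UNIV_card_ge_0[where 'a='a] by simp
  also have "x ^ \<dots> = x" using power_card_UNIV_minus_1[OF False] by (simp only: power_Suc mult_1_right)
  finally show ?thesis .
qed (simp add: finite_UNIV_card_ge_0)

lemma char_power_pos: "q = CHAR('a::{field,finite}) ^ k \<Longrightarrow> q > 0"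
  using prime_CHAR_finite_field[where 'a='a] by (simp add: prime_gt_0_nat)

lemma char_power_ge_2:
  assumes "q = CHAR('a::{field,finite}) ^ k" "k > 0"
  shows "q \<ge> 2"
proof -
  have "CHAR('a) \<ge> 2" using prime_CHAR_finite_field prime_ge_2_nat by blast
  moreover have "CHAR('a) \<le> q" using assms calculation by (simp add: self_le_power)
  ultimately show ?thesis by linarith
qed

lemma power_char_power_add:
  assumes "q = CHAR('a::{field,finite}) ^ k"
  shows "(x + y :: 'a) ^ q = x ^ q + y ^ q"
  using freshmans_dream'[OF prime_CHAR_finite_field assms] .

lemma power_char_power_diff:
  assumes "q = CHAR('a::{field,finite}) ^ k"
  shows "(x - y :: 'a) ^ q = x ^ q - y ^ q"
  using power_char_power_add[OF assms, of "x - y" y] by simp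

lemma power_char_power_uminus:
  assumes "q = CHAR('a::{field,finite}) ^ k"
  shows "(- x :: 'a) ^ q = - (x ^ q)"
  using power_char_power_diff[OF assms, of 0 x] char_power_pos[OF assms] by simp

lemma power_char_power_sum:
  assumes "q = CHAR('a::{field,finite}) ^ k"
  shows "sum f A ^ q = (\<Sum>i\<in>A. f i ^ q :: 'a)"
  using freshmans_dream_sum'[OF prime_CHAR_finite_field assms] .

lemma Fq_zero: "q > 0 \<Longrightarrow> 0 \<in> Fq q"
  by (simp add: Fq_def)

lemma Fq_diff:
  "q = CHAR('a::{field,finite}) ^ k \<Longrightarrow> x \<in> Fq q \<Longrightarrow> y \<in> Fq q \<Longrightarrow> (x - y :: 'a) \<in> Fq q"
  by (simp add: Fq_def power_char_power_diff)

lemma card_Fq: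
  assumes "q = CHAR('a::{field,finite}) ^ k" "k > 0" "card (UNIV :: 'a set) = q ^ 2"
  shows "card (Fq q :: 'a set) = q"
proof -
  have q2: "q \<ge> 2" using char_power_ge_2[OF assms(1,2)] .
  define P :: "'a poly" where "P = monom 1 q + [:0, -1:]"
  have degP: "degree P = q" using q2 unfolding P_def
    by (subst degree_add_eq_left) (auto simp: degree_monom_eq)
  have P0: "P \<noteq> 0" using degP q2 by auto
  have polyP: "poly P x = x ^ q - x" for x by (simp add: P_def poly_monom)
  have Fq_roots: "Fq q = {x. poly P x = 0}" by (auto simp: Fq_def polyP)
  have le: "card (Fq q :: 'a set) \<le> q" using card_poly_roots_bound[OF P0] degP Fq_roots by simp
  define R :: "'a poly" where "R = P ^ (q - 1) + 1"
  have degR: "degree R = q * (q - 1)" using q2 unfolding R_def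
    by (subst degree_add_eq_left) (auto simp: degree_power_eq P0 degP)
  have R0: "R \<noteq> 0"
  proof
    assume "R = 0"
    hence "q * (q - 1) = 0" using degR by simp
    thus False using q2 by simp
  qed
  txt \<open>\<open>y = x^q - x\<close> satisfies \<open>y^q = -y\<close>, so it is \<open>0\<close> or a root of \<open>Y^(q-1) + 1\<close>.\<close>
  have "poly P x = 0 \<or> poly R x = 0" for x
  proof -
    define y where "y = x ^ q - x"
    have "(x ^ q) ^ q = x"
      using power_card_UNIV_eq_self[of x] assms(3) by (simp add: power_mult[symmetric] power2_eq_square)
    hence "y ^ q = - y" by (simp add: y_def power_char_power_diff[OF assms(1)])
    moreover have "y ^ q = y * y ^ (q - 1)" using q2 by (simp add: power_eq_if)
    ultimately have "y * (y ^ (q - 1) + 1) = 0" by (simp add: distrib_left)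
    thus ?thesis by (simp add: y_def polyP R_def)
  qed
  hence "UNIV = {x. poly P x = 0} \<union> {x. poly R x = 0}" by auto
  hence "card (UNIV :: 'a set) \<le> card {x. poly P x = 0} + card {x. poly R x = 0}"
    using card_Un_le[of "{x. poly P x = 0}" "{x. poly R x = 0}"] by simp
  also have "\<dots> \<le> card (Fq q :: 'a set) + q * (q - 1)"
    using card_poly_roots_bound[OF R0] degR Fq_roots by simp
  finally have "q + q * (q - 1) \<le> card (Fq q :: 'a set) + q * (q - 1)"
    using assms(3) q2 by (simp add: power2_eq_square algebra_simps)
  with le show ?thesis by simp
qed

definition Fq_poly :: "nat \<Rightarrow> 'a::field poly \<Rightarrow> bool" where
  "Fq_poly q p \<longleftrightarrow> (\<forall>i. coeff p i \<in> Fq q)"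

definition frob_poly :: "nat \<Rightarrow> 'a::field poly \<Rightarrow> 'a poly" where
  "frob_poly q p = map_poly (\<lambda>c. c ^ q) p"

lemma coeff_frob_poly: "q > 0 \<Longrightarrow> coeff (frob_poly q p) i = coeff p i ^ q"
  unfolding frob_poly_def by (rule coeff_map_poly) simp

lemma frob_poly_eq_self_iff: "q > 0 \<Longrightarrow> frob_poly q p = p \<longleftrightarrow> Fq_poly q p"
  by (auto simp: poly_eq_iff coeff_frob_poly Fq_poly_def Fq_def)

lemma degree_frob_poly: "q > 0 \<Longrightarrow> degree (frob_poly q p) = degree p"
  unfolding frob_poly_def by (rule degree_map_poly) simp

context
  fixes q k :: nat
  assumes q_def: "q = CHAR('a::{field,finite}) ^ k"
begin

private lemma q_pos: "q > 0"
  using char_power_pos[OF q_def] .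

lemma frob_poly_add: "frob_poly q (p + r :: 'a poly) = frob_poly q p + frob_poly q r"
  by (rule poly_eqI) (simp add: coeff_frob_poly q_pos power_char_power_add[OF q_def])

lemma frob_poly_mult: "frob_poly q (p * r :: 'a poly) = frob_poly q p * frob_poly q r"
  by (rule poly_eqI)
     (simp add: coeff_frob_poly q_pos coeff_mult power_char_power_sum[OF q_def] power_mult_distrib)

lemma frob_poly_one: "frob_poly q (1 :: 'a poly) = 1"
  by (rule poly_eqI) (simp add: coeff_frob_poly q_pos coeff_1)

lemma frob_poly_prod: "frob_poly q (\<Prod>i\<in>A. f i :: 'a poly) = (\<Prod>i\<in>A. frob_poly q (f i))"
  by (induction A rule: infinite_finite_induct) (simp_all add: frob_poly_one frob_poly_mult)

lemma frob_poly_linear: "frob_poly q [:- z, 1:] = [:- (z ^ q), 1 :: 'a:]"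
  by (rule poly_eqI)
     (auto simp: coeff_frob_poly q_pos coeff_pCons power_char_power_uminus[OF q_def]
           split: nat.splits)

lemma Fq_poly_mult: "Fq_poly q p \<Longrightarrow> Fq_poly q r \<Longrightarrow> Fq_poly q (p * r :: 'a poly)"
  by (simp add: frob_poly_eq_self_iff[OF q_pos, symmetric] frob_poly_mult)

lemma Fq_poly_diff: "Fq_poly q p \<Longrightarrow> Fq_poly q r \<Longrightarrow> Fq_poly q (p - r :: 'a poly)"
  by (simp add: Fq_poly_def Fq_diff[OF q_def])

lemma Fq_poly_cancel:
  assumes "g \<noteq> 0" "Fq_poly q g" "Fq_poly q (g * h :: 'a poly)"
  shows "Fq_poly q h"
proof -
  have "g * frob_poly q h = g * h"
    using assms(2,3) by (simp add: frob_poly_eq_self_iff[OF q_pos, symmetric] frob_poly_mult)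
  thus ?thesis using assms(1) by (simp add: frob_poly_eq_self_iff[OF q_pos, symmetric])
qed

lemma Fq_poly_mod:
  assumes "Fq_poly q p" "Fq_poly q (d :: 'a poly)"
  shows "Fq_poly q (p mod d)"
proof (cases "d = 0")
  case False
  txt \<open>Frobenius fixes \<open>p\<close> and \<open>d\<close>, so it maps \<open>p mod d\<close> to another remainder of \<open>p\<close> by \<open>d\<close>.\<close>
  have "frob_poly q p = p" "frob_poly q d = d"
    using assms by (simp_all add: frob_poly_eq_self_iff[OF q_pos])
  hence "p = frob_poly q (p div d * d + p mod d)" by simp
  also have "\<dots> = frob_poly q (p div d) * d + frob_poly q (p mod d)"
    by (simp only: frob_poly_add frob_poly_mult \<open>frob_poly q d = d\<close>)
  finally have "frob_poly q (p mod d) mod d = p mod d"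
    by (metis mod_mult_self3)
  moreover have "degree (frob_poly q (p mod d)) < degree d \<or> frob_poly q (p mod d) = 0"
    using False degree_mod_less' degree_frob_poly[OF q_pos] by (metis map_poly_0 frob_poly_def)
  ultimately have "frob_poly q (p mod d) = p mod d"
    by (metis mod_poly_less mod_0)
  thus ?thesis by (simp add: frob_poly_eq_self_iff[OF q_pos])
qed (use assms in simp)

lemma Fq_poly_X_power_minus_1: "Fq_poly q (monom 1 n - 1 :: 'a poly)"
  by (auto simp: Fq_poly_def Fq_def coeff_monom coeff_1 power_char_power_uminus[OF q_def] q_pos)

end

section \<open>Cyclic codes and their subfield subcodes\<close>

lemma poly_gen_poly: "poly (gen_poly Z) x = (\<Prod>z\<in>Z. x - z)"
  by (simp add: gen_poly_def poly_prod)

lemma gen_poly_nonzero: "gen_poly (Z :: 'a::field set) \<noteq> 0"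
  unfolding gen_poly_def by (cases "finite Z") (simp_all add: prod_zero_iff)

lemma degree_gen_poly: "finite Z \<Longrightarrow> degree (gen_poly (Z :: 'a::field set)) = card Z"
  unfolding gen_poly_def by (subst degree_prod_eq_sum_degree) auto

lemma gen_poly_dvdI:
  assumes "finite Z" "\<forall>z\<in>Z. poly u z = (0 :: 'a::field)"
  shows "gen_poly Z dvd u"
  using assms
proof (induction Z rule: finite_induct)
  case (insert z Z)
  then obtain h where h: "u = gen_poly Z * h" by auto
  have "poly (gen_poly Z) z \<noteq> 0" using insert.hyps by (auto simp: poly_gen_poly)
  hence "poly h z = 0" using h insert.prems by simp
  then obtain h' where "h = [:-z, 1:] * h'" by (metis dvdE poly_eq_0_iff_dvd)
  moreover have "gen_poly (insert z Z) = [:-z, 1:] * gen_poly Z"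
    using insert.hyps by (simp add: gen_poly_def)
  ultimately have "u = gen_poly (insert z Z) * h'" using h by (simp only: mult_ac)
  thus ?case by simp
qed (simp add: gen_poly_def)

lemma Fq_poly_gen_poly:
  assumes "q = CHAR('a::{field,finite}) ^ k" "finite Z" "(\<lambda>z. z ^ q) ` Z = (Z :: 'a set)"
  shows "Fq_poly q (gen_poly Z)"
proof -
  have inj: "inj_on (\<lambda>z. z ^ q) Z" using assms(2,3) by (simp add: eq_card_imp_inj_on)
  have "frob_poly q (gen_poly Z) = (\<Prod>z\<in>Z. [:- (z ^ q), 1:])"
    by (simp add: gen_poly_def frob_poly_prod[OF assms(1)] frob_poly_linear[OF assms(1)])
  also have "\<dots> = gen_poly ((\<lambda>z. z ^ q) ` Z)"
    by (simp add: gen_poly_def prod.reindex[OF inj])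
  finally have "frob_poly q (gen_poly Z) = gen_poly Z" using assms(3) by simp
  thus ?thesis using frob_poly_eq_self_iff[OF char_power_pos[OF assms(1)]] by blast
qed

lemma degree_X_power_minus_1: "n > 0 \<Longrightarrow> degree (monom 1 n - 1 :: 'a::field poly) = n"
  using degree_add_eq_left[of "-1" "monom (1 :: 'a) n"] by (simp add: degree_monom_eq)

lemma degree_mod_X_power_minus_1: "n > 0 \<Longrightarrow> degree (p mod (monom 1 n - 1) :: 'a::field poly) < n"
  by (metis degree_0 degree_X_power_minus_1 degree_mod_less' diff_0_right not_gr0 poly_mod_diff_left)

lemma mod_X_power_minus_1_eq:
  "degree (p :: 'a::field poly) < n \<Longrightarrow> p mod (monom 1 n - 1) = p"
  by (simp add: mod_poly_less degree_X_power_minus_1)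

lemma cyclic_code_eq:
  fixes Z :: "'a::field set"
  assumes "finite Z" "n > 0" "\<forall>z\<in>Z. z ^ n = 1"
  shows "cyclic_code n Z = {u. degree u < n \<and> (\<forall>z\<in>Z. poly u z = 0)}"
proof (intro Set.set_eqI iffI)
  fix u assume "u \<in> cyclic_code n Z"
  then obtain f where u: "u = (f * gen_poly Z) mod (monom 1 n - 1)"
    by (auto simp: cyclic_code_def)
  have "poly u z = 0" if "z \<in> Z" for z
  proof -
    have "poly (monom 1 n - 1) z = 0" using assms(3) that by (simp add: poly_monom)
    thus ?thesis using that assms(1) by (simp add: u poly_mod poly_gen_poly)
  qed
  thus "u \<in> {u. degree u < n \<and> (\<forall>z\<in>Z. poly u z = 0)}"
    using degree_mod_X_power_minus_1[OF assms(2)] u by simp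
next
  fix u assume "u \<in> {u. degree u < n \<and> (\<forall>z\<in>Z. poly u z = 0)}"
  hence u: "degree u < n" "\<forall>z\<in>Z. poly u z = 0" by simp_all
  obtain h where "u = h * gen_poly Z"
    using gen_poly_dvdI[OF assms(1) u(2)] by (metis dvdE mult.commute)
  thus "u \<in> cyclic_code n Z"
    using u(1) by (auto simp: cyclic_code_def mod_X_power_minus_1_eq intro!: exI[of _ h])
qed

lemma cyclic_code_Fq_eq:
  fixes Z :: "'a::{field,finite} set"
  assumes q: "q = CHAR('a) ^ k" and "Fq_poly q (gen_poly Z)"
    and "finite Z" "n > 0" "\<forall>z\<in>Z. z ^ n = 1"
  shows "cyclic_code_Fq q n Z = {u \<in> cyclic_code n Z. Fq_poly q u}"
proof (intro Set.set_eqI iffI)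
  fix u assume "u \<in> cyclic_code_Fq q n Z"
  then obtain f where u: "u = (f * gen_poly Z) mod (monom 1 n - 1)" "Fq_poly q f"
    by (auto simp: cyclic_code_Fq_def Fq_poly_def)
  have "u \<in> cyclic_code n Z" using u(1) by (auto simp: cyclic_code_def)
  moreover have "Fq_poly q u"
    using u assms(2) by (simp add: Fq_poly_mod[OF q] Fq_poly_mult[OF q] Fq_poly_X_power_minus_1[OF q])
  ultimately show "u \<in> {u \<in> cyclic_code n Z. Fq_poly q u}" by simp
next
  fix u assume "u \<in> {u \<in> cyclic_code n Z. Fq_poly q u}"
  hence u: "degree u < n" "\<forall>z\<in>Z. poly u z = 0" "Fq_poly q u"
    using cyclic_code_eq[OF assms(3-5)] by auto
  obtain h where h: "u = h * gen_poly Z"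
    using gen_poly_dvdI[OF assms(3) u(2)] by (metis dvdE mult.commute)
  hence "Fq_poly q h" using Fq_poly_cancel[OF q gen_poly_nonzero assms(2)] u(3) by (simp add: mult.commute)
  thus "u \<in> cyclic_code_Fq q n Z"
    using h u(1) by (auto simp: cyclic_code_Fq_def Fq_poly_def mod_X_power_minus_1_eq intro!: exI[of _ h])
qed

lemma card_polys_degree_less:
  assumes "finite K" "0 \<in> K" "N > 0"
  shows "card {h::'a::zero poly. degree h < N \<and> (\<forall>i. coeff h i \<in> K)} = card K ^ N"
proof -
  let ?H = "{h::'a poly. degree h < N \<and> (\<forall>i. coeff h i \<in> K)}"
  let ?L = "{xs. set xs \<subseteq> K \<and> length xs = N}"
  have "bij_betw (\<lambda>h. map (coeff h) [0..<N]) ?H ?L"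
  proof (rule bij_betw_byWitness[where f' = Poly])
    show "\<forall>h\<in>?H. Poly (map (coeff h) [0..<N]) = h"
      by (auto simp: poly_eq_iff nth_default_def coeff_eq_0)
    show "\<forall>xs\<in>?L. map (coeff (Poly xs)) [0..<N] = xs"
      by (auto simp: nth_default_def intro!: nth_equalityI)
    show "(\<lambda>h. map (coeff h) [0..<N]) ` ?H \<subseteq> ?L" by auto
    show "Poly ` ?L \<subseteq> ?H"
    proof safe
      fix xs assume xs: "set xs \<subseteq> K" "N = length xs"
      show "degree (Poly xs) < length xs"
      proof (cases "Poly xs = 0")
        case False
        hence "coeff (Poly xs) (degree (Poly xs)) \<noteq> 0" by (rule leading_coeff_neq_0)
        thus ?thesis by (auto simp: coeff_Poly_eq nth_default_def split: if_splits)
      qed (use xs assms in auto)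
      show "coeff (Poly xs) i \<in> K" for i using xs assms(2) by (auto simp: nth_default_def)
    qed
  qed
  hence "card ?H = card ?L" by (rule bij_betw_same_card)
  thus ?thesis using card_lists_length_eq[OF assms(1)] by simp
qed

lemma card_cyclic_code_Fq:
  fixes Z :: "'a::{field,finite} set"
  assumes q: "q = CHAR('a) ^ k" and "Fq_poly q (gen_poly Z)"
    and "finite Z" "n > 0" "\<forall>z\<in>Z. z ^ n = 1" "card Z < n"
  shows "card (cyclic_code_Fq q n Z) = card (Fq q :: 'a set) ^ (n - card Z)"
proof -
  let ?H = "{h :: 'a poly. degree h < n - card Z \<and> (\<forall>i. coeff h i \<in> Fq q)}"
  have degree_mult: "degree (gen_poly Z * h) = card Z + degree h" if "h \<noteq> 0" for h
    using degree_mult_eq[OF gen_poly_nonzero that] degree_gen_poly[OF assms(3)] by simp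
  have "cyclic_code_Fq q n Z = (\<lambda>h. gen_poly Z * h) ` ?H"
  proof safe
    fix u assume "u \<in> cyclic_code_Fq q n Z"
    hence u: "degree u < n" "\<forall>z\<in>Z. poly u z = 0" "Fq_poly q u"
      using cyclic_code_Fq_eq[OF assms(1-5)] cyclic_code_eq[OF assms(3-5)] by auto
    obtain h where h: "u = gen_poly Z * h" using gen_poly_dvdI[OF assms(3) u(2)] by blast
    have "Fq_poly q h" using Fq_poly_cancel[OF q gen_poly_nonzero assms(2)] u(3) h by simp
    moreover have "degree h < n - card Z"
      using u(1) h degree_mult assms(6) by (cases "h = 0") auto
    ultimately show "u \<in> (\<lambda>h. gen_poly Z * h) ` ?H" using h by (auto simp: Fq_poly_def)
  next
    fix h :: "'a poly" assume "degree h < n - card Z" "\<forall>i. coeff h i \<in> Fq q"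
    moreover from this have "degree (gen_poly Z * h) < n"
      using degree_mult assms(4,6) by (cases "h = 0") auto
    ultimately show "gen_poly Z * h \<in> cyclic_code_Fq q n Z"
      using assms(2,3) Fq_poly_mult[OF q]
      by (auto simp: cyclic_code_Fq_eq[OF assms(1-5)] cyclic_code_eq[OF assms(3-5)]
          poly_gen_poly Fq_poly_def)
  qed
  moreover have "inj_on (\<lambda>h. gen_poly Z * h) ?H" by (rule inj_onI) (simp add: gen_poly_nonzero)
  moreover have "card ?H = card (Fq q :: 'a set) ^ (n - card Z)"
    by (rule card_polys_degree_less) (use assms(6) in \<open>simp_all add: Fq_zero char_power_pos[OF q]\<close>)
  ultimately show ?thesis by (simp add: card_image)
qed

section \<open>Weights, the BCH bound and dual codes\<close>

lemma code_dim_eqI: "card C = q ^ k \<Longrightarrow> q \<ge> 2 \<Longrightarrow> code_dim q C = k"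
  unfolding code_dim_def by (rule the_equality) (simp_all add: power_inject_exp)

definition supp :: "nat \<Rightarrow> 'a::zero poly \<Rightarrow> nat set" where
  "supp n c = {i. i < n \<and> coeff c i \<noteq> 0}"

lemma hweight_eq_card_supp: "hweight n c = card (supp n c)"
  by (simp add: hweight_def supp_def)

lemma supp_subset: "supp n c \<subseteq> {..<n}"
  by (auto simp: supp_def)

lemma supp_nonempty: "degree c < n \<Longrightarrow> c \<noteq> 0 \<Longrightarrow> supp n c \<noteq> {}"
  by (auto simp: supp_def intro!: exI[of _ "degree c"])

lemma hweight_le: "hweight n c \<le> n"
  using card_mono[OF _ supp_subset] by (simp add: hweight_eq_card_supp)

lemma min_dist_le: "c \<in> C \<Longrightarrow> c \<noteq> 0 \<Longrightarrow> min_dist n C \<le> hweight n c"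
  unfolding min_dist_def
  by (rule Min_le) (auto intro: finite_subset[of _ "{..n}"] simp: hweight_le)

lemma min_dist_attained:
  assumes "c \<in> C" "c \<noteq> 0"
  obtains d where "d \<in> C" "d \<noteq> 0" "hweight n d = min_dist n C"
proof -
  have "min_dist n C \<in> {hweight n c | c. c \<in> C \<and> c \<noteq> 0}"
    unfolding min_dist_def using assms
    by (intro Min_in) (auto intro: finite_subset[of _ "{..n}"] simp: hweight_le)
  thus ?thesis using that by auto
qed

lemma min_dist_eqI:
  assumes "\<And>c. c \<in> C \<Longrightarrow> c \<noteq> 0 \<Longrightarrow> w \<le> hweight n c"
    and "d \<in> C" "d \<noteq> 0" "hweight n d \<le> w"
  shows "min_dist n C = w"
  using min_dist_le[OF assms(2,3)] min_dist_attained[OF assms(2,3)] assms(1,4)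
  by (metis antisym order_trans)

lemma poly_eq_sum_lessThan:
  fixes u :: "'a::comm_ring_1 poly"
  assumes "degree u < n"
  shows "poly u x = (\<Sum>i<n. coeff u i * x ^ i)"
proof -
  have "poly u x = (\<Sum>i\<le>degree u. coeff u i * x ^ i)" by (rule poly_altdef)
  also have "\<dots> = (\<Sum>i<n. coeff u i * x ^ i)"
    by (rule sum.mono_neutral_left) (use assms in \<open>auto simp: coeff_eq_0\<close>)
  finally show ?thesis .
qed

lemma vandermonde_kernel_trivial:
  fixes y u :: "'b \<Rightarrow> 'a::field"
  assumes "finite I" "inj_on y I" "\<forall>j<card I. (\<Sum>i\<in>I. u i * y i ^ j) = 0" "i0 \<in> I"
  shows "u i0 = 0"
proof -
  txt \<open>Test the linear relations against the Lagrange polynomial vanishing on \<open>I - {i0}\<close>.\<close>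
  define P where "P = (\<Prod>k\<in>I - {i0}. [:- y k, 1:])"
  have "degree P \<le> card I - 1"
    unfolding P_def using degree_prod_sum_le[of "I - {i0}" "\<lambda>k. [:- y k, 1:]"] assms(1,4)
    by (simp add: o_def)
  moreover have "card I > 0" using assms(1,4) card_gt_0_iff by blast
  ultimately have degP: "degree P < card I" by linarith
  have "(\<Sum>i\<in>I. u i * poly P (y i)) = (\<Sum>j\<le>degree P. coeff P j * (\<Sum>i\<in>I. u i * y i ^ j))"
    by (simp add: poly_altdef sum_distrib_left sum_distrib_right mult_ac sum.swap[of _ I])
  also have "\<dots> = 0" using assms(3) degP by (intro sum.neutral) auto
  finally have "(\<Sum>i\<in>I. u i * poly P (y i)) = 0" .
  moreover have "(\<Sum>i\<in>I. u i * poly P (y i)) = u i0 * poly P (y i0) + (\<Sum>i\<in>I - {i0}. u i * poly P (y i))"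
    by (rule sum.remove[OF assms(1,4)])
  moreover have "(\<Sum>i\<in>I - {i0}. u i * poly P (y i)) = 0"
    by (rule sum.neutral) (use assms(1) in \<open>auto simp: P_def poly_prod prod_zero_iff\<close>)
  moreover have "poly P (y i0) \<noteq> 0"
    using assms(1,2,4) by (auto simp: P_def poly_prod prod_zero_iff inj_on_def)
  ultimately show ?thesis by simp
qed

locale primitive_root =
  fixes \<beta> :: "'a::field" and n :: nat
  assumes power_n: "\<beta> ^ n = 1"
    and power_neq_1: "\<And>k. 0 < k \<Longrightarrow> k < n \<Longrightarrow> \<beta> ^ k \<noteq> 1"
    and n_pos: "n > 0"
begin

lemma nonzero: "\<beta> \<noteq> 0"
  using power_n n_pos by (metis power_0_left zero_neq_one not_gr0)

lemma power_eq_1_iff: "\<beta> ^ j = 1 \<longleftrightarrow> n dvd j"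
proof
  assume "\<beta> ^ j = 1"
  have "\<beta> ^ j = (\<beta> ^ n) ^ (j div n) * \<beta> ^ (j mod n)"
    by (simp add: power_mult[symmetric] power_add[symmetric])
  hence "\<beta> ^ (j mod n) = 1" using \<open>\<beta> ^ j = 1\<close> power_n by simp
  hence "j mod n = 0" using power_neq_1[of "j mod n"] n_pos by (meson mod_less_divisor not_gr0)
  thus "n dvd j" by (simp add: dvd_eq_mod_eq_0)
qed (auto simp: power_mult power_n)

lemma inj_on_power: "inj_on (\<lambda>i. \<beta> ^ i) {..<n}"
proof (rule linorder_inj_onI')
  fix i j assume "i \<in> {..<n}" "j \<in> {..<n}" "i < j"
  hence "\<beta> ^ (j - i) \<noteq> 1" using power_neq_1 by simp
  moreover have "\<beta> ^ j = \<beta> ^ i * \<beta> ^ (j - i)" using \<open>i < j\<close> by (simp flip: power_add)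
  ultimately show "\<beta> ^ i \<noteq> \<beta> ^ j" using nonzero by auto
qed

lemma power_coprime: "coprime b n \<Longrightarrow> primitive_root (\<beta> ^ b) n"
  by unfold_locales
     (auto simp: power_mult[symmetric] power_eq_1_iff coprime_dvd_mult_right_iff
                 coprime_commute n_pos nat_dvd_not_less)

definition \<zeta> :: "int \<Rightarrow> 'a" where
  "\<zeta> i = \<beta> powi i"

lemma \<zeta>_of_nat: "\<zeta> (int k) = \<beta> ^ k"
  by (simp add: \<zeta>_def)

lemma \<zeta>_add: "\<zeta> (i + j) = \<zeta> i * \<zeta> j"
  unfolding \<zeta>_def using nonzero by (simp add: power_int_add)

lemma \<zeta>_uminus: "\<zeta> (- i) = inverse (\<zeta> i)"
  unfolding \<zeta>_def by (simp add: power_int_minus)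

lemma \<zeta>_nonzero: "\<zeta> i \<noteq> 0"
  using nonzero by (simp add: \<zeta>_def)

lemma \<zeta>_mod: "\<zeta> i = \<beta> ^ nat (i mod int n)"
proof -
  have "\<zeta> i = \<zeta> (int n * (i div int n)) * \<zeta> (i mod int n)"
    by (metis \<zeta>_add div_mult_mod_eq mult.commute)
  also have "\<zeta> (int n * (i div int n)) = 1"
    by (simp add: \<zeta>_def power_int_mult power_n)
  also have "\<zeta> (i mod int n) = \<beta> ^ nat (i mod int n)"
    using n_pos by (metis \<zeta>_of_nat int_nat_eq pos_mod_sign of_nat_0_less_iff)
  finally show ?thesis by simp
qed

lemma \<zeta>_power_n: "\<zeta> i ^ n = 1"
proof -
  have "\<zeta> i ^ n = (\<beta> ^ n) ^ nat (i mod int n)"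
    by (simp only: \<zeta>_mod power_mult[symmetric] mult.commute)
  thus ?thesis using power_n by simp
qed

lemma \<zeta>_eq_1_iff: "\<zeta> i = 1 \<longleftrightarrow> int n dvd i"
proof -
  have "\<zeta> i = 1 \<longleftrightarrow> n dvd nat (i mod int n)" by (simp add: \<zeta>_mod power_eq_1_iff)
  also have "\<dots> \<longleftrightarrow> nat (i mod int n) = 0"
  proof
    assume "n dvd nat (i mod int n)"
    moreover have "nat (i mod int n) < n" using n_pos by (simp add: nat_less_iff)
    ultimately show "nat (i mod int n) = 0" using nat_dvd_not_less by blast
  qed simp
  also have "\<dots> \<longleftrightarrow> i mod int n = 0"
    using n_pos pos_mod_sign[of "int n" i] by linarith
  finally show ?thesis by (simp add: dvd_eq_mod_eq_0)
qed

lemma \<zeta>_eq_iff: "\<zeta> i = \<zeta> j \<longleftrightarrow> int n dvd i - j"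
proof -
  have "\<zeta> i = \<zeta> (i - j) * \<zeta> j" by (simp flip: \<zeta>_add)
  hence "\<zeta> i = \<zeta> j \<longleftrightarrow> \<zeta> (i - j) = 1" using \<zeta>_nonzero[of j] by auto
  thus ?thesis by (simp add: \<zeta>_eq_1_iff)
qed

lemma inj_on_\<zeta>:
  assumes "J \<subseteq> {lo..<lo + int n}"
  shows "inj_on \<zeta> J"
proof (rule inj_onI)
  fix i j assume "i \<in> J" "j \<in> J" "\<zeta> i = \<zeta> j"
  then obtain c where c: "i - j = int n * c" using \<zeta>_eq_iff by (meson dvdE)
  have "i \<in> {lo..<lo + int n}" "j \<in> {lo..<lo + int n}" using \<open>i \<in> J\<close> \<open>j \<in> J\<close> assms by auto
  hence "\<bar>int n * c\<bar> < int n" using c by auto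
  hence "c = 0" using n_pos by (auto simp: abs_mult)
  thus "i = j" using c by simp
qed

lemma bch_bound:
  assumes "degree c < n" "c \<noteq> 0" "\<forall>j<T. poly c (\<zeta> (s + int j)) = 0"
  shows "T < hweight n c"
proof (rule ccontr)
  let ?I = "supp n c"
  assume "\<not> T < hweight n c"
  hence card_I: "card ?I \<le> T" by (simp add: hweight_eq_card_supp)
  have "\<forall>j<card ?I. (\<Sum>i\<in>?I. (coeff c i * \<zeta> (s * int i)) * (\<beta> ^ i) ^ j) = 0"
  proof (intro allI impI)
    fix j assume "j < card ?I"
    have "0 = (\<Sum>i<n. coeff c i * \<zeta> (s + int j) ^ i)"
      using assms(3) \<open>j < card ?I\<close> card_I poly_eq_sum_lessThan[OF assms(1)] by simp
    also have "\<dots> = (\<Sum>i\<in>?I. coeff c i * \<zeta> (s + int j) ^ i)"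
      by (rule sum.mono_neutral_right) (auto simp: supp_def)
    also have "\<dots> = (\<Sum>i\<in>?I. (coeff c i * \<zeta> (s * int i)) * (\<beta> ^ i) ^ j)"
    proof (rule sum.cong[OF refl])
      fix i
      have "\<zeta> (s + int j) ^ i = \<zeta> (s * int i + int (i * j))"
        by (simp add: \<zeta>_def power_int_power' algebra_simps)
      also have "\<dots> = \<zeta> (s * int i) * (\<beta> ^ i) ^ j"
        by (simp only: \<zeta>_add \<zeta>_of_nat power_mult)
      finally show "coeff c i * \<zeta> (s + int j) ^ i = (coeff c i * \<zeta> (s * int i)) * (\<beta> ^ i) ^ j"
        by simp
    qed
    finally show "(\<Sum>i\<in>?I. (coeff c i * \<zeta> (s * int i)) * (\<beta> ^ i) ^ j) = 0" by simp
  qed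
  moreover have "inj_on (\<lambda>i. \<beta> ^ i) ?I" using inj_on_subset[OF inj_on_power supp_subset] .
  moreover obtain i where "i \<in> ?I" using supp_nonempty[OF assms(1,2)] by blast
  ultimately have "coeff c i * \<zeta> (s * int i) = 0"
    by (intro vandermonde_kernel_trivial[where y = "\<lambda>i. \<beta> ^ i"])
       (auto intro: finite_subset[OF supp_subset])
  thus False using \<open>i \<in> ?I\<close> \<zeta>_nonzero by (simp add: supp_def)
qed

end

definition word_of :: "nat \<Rightarrow> (nat \<Rightarrow> 'a::field) \<Rightarrow> 'a poly" where
  "word_of n f = (\<Sum>i<n. monom (f i) i)"

lemma coeff_word_of: "coeff (word_of n f) i = (if i < n then f i else 0)"
  by (simp add: word_of_def coeff_sum coeff_monom)

lemma degree_word_of: "n > 0 \<Longrightarrow> degree (word_of n f) < n"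
proof -
  have "degree (word_of n f) \<le> n - 1"
    unfolding word_of_def by (rule degree_sum_le) (auto intro: order_trans[OF degree_monom_le])
  thus "n > 0 \<Longrightarrow> degree (word_of n f) < n" by linarith
qed

lemma poly_word_of: "poly (word_of n f) x = (\<Sum>i<n. f i * x ^ i)"
  by (simp add: word_of_def poly_sum poly_monom)

lemma word_len_iff_degree_less: "n > 0 \<Longrightarrow> word_len n u \<longleftrightarrow> degree u < n"
proof
  assume "n > 0" "word_len n u"
  show "degree u < n"
  proof (rule ccontr)
    assume "\<not> degree u < n"
    hence "coeff u (degree u) = 0" using \<open>word_len n u\<close> by (simp add: word_len_def)
    hence "u = 0" by simp
    thus False using \<open>\<not> degree u < n\<close> \<open>n > 0\<close> by simp
  qed
qed (simp add: word_len_def coeff_eq_0)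

lemma power_mod_eq: "(a :: 'a::monoid_mult) ^ n = 1 \<Longrightarrow> a ^ (x mod n) = a ^ x"
proof -
  assume "a ^ n = 1"
  have "a ^ x = (a ^ n) ^ (x div n) * a ^ (x mod n)"
    by (simp only: power_mult[symmetric] power_add[symmetric] mult_div_mod_eq)
  thus ?thesis using \<open>a ^ n = 1\<close> by simp
qed

lemma dual_code_eval_eq_0:
  fixes Z :: "'a::field set"
  assumes "finite Z" "n > 0" "\<forall>a\<in>Z. a ^ n = 1"
    and "v \<in> dual_code n (cyclic_code n Z)" "\<gamma> ^ n = 1" "\<forall>a\<in>Z. \<gamma> * a \<noteq> 1"
  shows "poly v \<gamma> = 0"
proof -
  txt \<open>The word \<open>(\<gamma>\<^sup>i)\<^sub>i\<close> lies in the code: at each \<open>a \<in> Z\<close> it evaluates to a geometric sum of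
    an \<open>n\<close>-th root of unity different from \<open>1\<close>.\<close>
  let ?u = "word_of n (\<lambda>i. \<gamma> ^ i)"
  have "poly ?u a = 0" if "a \<in> Z" for a
  proof -
    have "(\<gamma> * a) ^ n = 1" using assms(3,5) that by (simp add: power_mult_distrib)
    thus ?thesis
      using geometric_sum[of "\<gamma> * a" n] assms(6) that by (simp add: poly_word_of power_mult_distrib)
  qed
  hence "?u \<in> cyclic_code n Z" using cyclic_code_eq[OF assms(1-3)] degree_word_of[OF assms(2)] by simp
  hence "(\<Sum>i<n. coeff ?u i * coeff v i) = 0" using assms(4) by (simp add: dual_code_def)
  moreover have "degree v < n"
    using assms(2,4) by (simp add: dual_code_def word_len_iff_degree_less)
  ultimately show ?thesis by (simp add: poly_eq_sum_lessThan coeff_word_of mult.commute)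
qed

lemma eval_word_in_dual_code:
  fixes Z :: "'a::field set"
  assumes "finite Z" "n > 0" "\<forall>a\<in>Z. a ^ n = 1" "a \<in> Z"
  shows "word_of n (\<lambda>i. a ^ i) \<in> dual_code n (cyclic_code n Z)"
proof -
  have "(\<Sum>i<n. coeff c i * a ^ i) = 0" if "c \<in> cyclic_code n Z" for c
    using that assms(4) cyclic_code_eq[OF assms(1-3)] poly_eq_sum_lessThan[of c n a] by auto
  thus ?thesis
    using degree_word_of[OF assms(2)] assms(2)
    by (simp add: dual_code_def word_len_iff_degree_less coeff_word_of)
qed

lemma word_of_power_nonzero: "n > 0 \<Longrightarrow> word_of n (\<lambda>i. a ^ i) \<noteq> 0"
  by (metis coeff_0 coeff_word_of power_0 zero_neq_one)

lemma hadamard_product_eval_eq_0: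
  fixes A :: "'a::field set"
  assumes "finite A" "n > 0" "\<forall>a\<in>A. a ^ n = 1"
    and "v \<in> dual_code n (cyclic_code n A)"
    and "degree x < n" "\<forall>a\<in>A. poly x (a * \<gamma>) = 0"
  shows "poly (word_of n (\<lambda>i. coeff x i * coeff v i)) \<gamma> = 0"
proof -
  txt \<open>The word \<open>(x\<^sub>i \<gamma>\<^sup>i)\<^sub>i\<close> vanishes on \<open>A\<close>, so it is orthogonal to \<open>v\<close>.\<close>
  let ?u = "word_of n (\<lambda>i. coeff x i * \<gamma> ^ i)"
  have "poly ?u a = poly x (a * \<gamma>)" for a
    by (simp add: poly_word_of poly_eq_sum_lessThan[OF assms(5)] power_mult_distrib mult_ac)
  hence "?u \<in> cyclic_code n A"
    using assms(6) cyclic_code_eq[OF assms(1-3)] degree_word_of[OF assms(2)] by simp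
  hence "(\<Sum>i<n. coeff ?u i * coeff v i) = 0" using assms(4) by (simp add: dual_code_def)
  thus ?thesis by (simp add: poly_word_of coeff_word_of mult_ac)
qed

definition cyc_shift :: "nat \<Rightarrow> nat \<Rightarrow> 'a::field poly \<Rightarrow> 'a poly" where
  "cyc_shift n t w = word_of n (\<lambda>k. coeff w ((k + t) mod n))"

lemma bij_betw_add_mod:
  fixes n t :: nat
  assumes "n > 0"
  shows "bij_betw (\<lambda>k. (k + t) mod n) {..<n} {..<n}"
proof -
  have "inj_on (\<lambda>k. (k + t) mod n) {..<n}"
  proof (rule inj_onI)
    fix k l assume "k \<in> {..<n}" "l \<in> {..<n}" "(k + t) mod n = (l + t) mod n"
    hence "[k = l] (mod n)" by (simp add: cong_def[symmetric] cong_add_rcancel_nat)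
    thus "k = l" using \<open>k \<in> {..<n}\<close> \<open>l \<in> {..<n}\<close> by (simp add: cong_def)
  qed
  moreover from this have "(\<lambda>k. (k + t) mod n) ` {..<n} = {..<n}"
    using assms by (intro endo_inj_surj) auto
  ultimately show ?thesis by (simp add: bij_betw_def)
qed

lemma supp_cyc_shift: "n > 0 \<Longrightarrow> supp n (cyc_shift n t v) = {k. k < n \<and> (k + t) mod n \<in> supp n v}"
  by (auto simp: supp_def cyc_shift_def coeff_word_of)

lemma card_supp_cyc_shift:
  assumes "n > 0"
  shows "card (supp n (cyc_shift n t v)) = card (supp n v)"
proof -
  have bij: "bij_betw (\<lambda>k. (k + t) mod n) {..<n} {..<n}" by (rule bij_betw_add_mod[OF assms])
  have "supp n (cyc_shift n t v) = {k \<in> {..<n}. (k + t) mod n \<in> supp n v}"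
    using supp_cyc_shift[OF assms] by auto
  hence "(\<lambda>k. (k + t) mod n) ` supp n (cyc_shift n t v) = supp n v"
    using bij_betw_imp_surj_on[OF bij] by (auto simp: supp_def)
  moreover have "inj_on (\<lambda>k. (k + t) mod n) (supp n (cyc_shift n t v))"
    using bij supp_subset by (auto simp: bij_betw_def intro: inj_on_subset)
  ultimately show ?thesis by (metis card_image)
qed

lemma poly_cyc_shift:
  assumes "n > 0" "degree w < n" "(a :: 'a::field) ^ n = 1"
  shows "a ^ t * poly (cyc_shift n t w) a = poly w a"
proof -
  have "a ^ t * poly (cyc_shift n t w) a = (\<Sum>k<n. coeff w ((k + t) mod n) * a ^ ((k + t) mod n))"
    by (simp add: cyc_shift_def poly_word_of sum_distrib_left power_mod_eq[OF assms(3)]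
                  power_add mult_ac)
  also have "\<dots> = (\<Sum>k<n. coeff w k * a ^ k)"
    using sum.reindex_bij_betw[OF bij_betw_add_mod[OF assms(1)], of "\<lambda>k. coeff w k * a ^ k"] by simp
  finally show ?thesis using poly_eq_sum_lessThan[OF assms(2)] by simp
qed

lemma cyc_shift_in_cyclic_code:
  fixes Z :: "'a::field set"
  assumes "finite Z" "n > 0" "\<forall>a\<in>Z. a ^ n = 1" "u \<in> cyclic_code n Z"
  shows "cyc_shift n t u \<in> cyclic_code n Z"
proof -
  have u: "degree u < n" "\<forall>a\<in>Z. poly u a = 0" using assms(4) cyclic_code_eq[OF assms(1-3)] by auto
  have "poly (cyc_shift n t u) a = 0" if "a \<in> Z" for a
  proof -
    have "a ^ n = 1" using assms(3) that by blast
    moreover from this have "a \<noteq> 0" using assms(2) by (metis power_0_left zero_neq_one not_gr0)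
    ultimately show ?thesis using poly_cyc_shift[OF assms(2) u(1)] u(2) that by force
  qed
  thus ?thesis using cyclic_code_eq[OF assms(1-3)] degree_word_of[OF assms(2)] by (simp add: cyc_shift_def)
qed

lemma cyc_shift_in_dual_code:
  fixes Z :: "'a::field set"
  assumes "finite Z" "n > 0" "\<forall>a\<in>Z. a ^ n = 1" "v \<in> dual_code n (cyclic_code n Z)" "t < n"
  shows "cyc_shift n t v \<in> dual_code n (cyclic_code n Z)"
  unfolding dual_code_def
proof (intro CollectI conjI ballI)
  show "word_len n (cyc_shift n t v)"
    using assms(2) by (simp add: cyc_shift_def word_len_iff_degree_less degree_word_of)
  fix u assume u: "u \<in> cyclic_code n Z"
  txt \<open>Shifting \<open>v\<close> forward is adjoint to shifting \<open>u\<close> backward by \<open>n - t\<close>.\<close>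
  have shift_back: "((k + (n - t)) mod n + t) mod n = k" if "k < n" for k
  proof -
    have "((k + (n - t)) mod n + t) mod n = (k + n) mod n" using assms(5) by (simp add: mod_add_left_eq)
    thus ?thesis using that by simp
  qed
  have "(\<Sum>k<n. coeff u k * coeff (cyc_shift n t v) k) = (\<Sum>k<n. coeff u k * coeff v ((k + t) mod n))"
    by (simp add: cyc_shift_def coeff_word_of)
  also have "\<dots> = (\<Sum>k<n. coeff u ((k + (n - t)) mod n) * coeff v (((k + (n - t)) mod n + t) mod n))"
    using sum.reindex_bij_betw[OF bij_betw_add_mod[OF assms(2)],
        of "\<lambda>k. coeff u k * coeff v ((k + t) mod n)" "n - t"] by simp
  also have "\<dots> = (\<Sum>k<n. coeff (cyc_shift n (n - t) u) k * coeff v k)"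
    by (rule sum.cong[OF refl]) (simp add: shift_back cyc_shift_def coeff_word_of)
  also have "\<dots> = 0"
    using cyc_shift_in_cyclic_code[OF assms(1-3) u] assms(4) by (simp add: dual_code_def)
  finally show "(\<Sum>k<n. coeff u k * coeff (cyc_shift n t v) k) = 0" .
qed

lemma exists_nonzero_vanishing_on:
  fixes C :: "'a::ab_group_add poly set"
  assumes "finite U" "finite K" "\<forall>c\<in>C. \<forall>i. coeff c i \<in> K" "card K ^ card U < card C"
    and "\<forall>c1\<in>C. \<forall>c2\<in>C. c1 - c2 \<in> C"
  obtains d where "d \<in> C" "d \<noteq> 0" "\<forall>i\<in>U. coeff d i = 0"
proof -
  let ?restr = "\<lambda>c. restrict (coeff c) U"
  have "?restr ` C \<subseteq> PiE U (\<lambda>_. K)" using assms(3) by auto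
  moreover have "finite (PiE U (\<lambda>_. K))" using assms(1,2) by (simp add: finite_PiE)
  moreover have "card (PiE U (\<lambda>_. K)) < card C" using assms(1,4) by (simp add: card_PiE)
  ultimately have "\<not> inj_on ?restr C" by (metis card_inj_on_le leD)
  then obtain c1 c2 where "c1 \<in> C" "c2 \<in> C" "c1 \<noteq> c2" "?restr c1 = ?restr c2"
    unfolding inj_on_def by blast
  moreover from this have "coeff (c1 - c2) i = 0" if "i \<in> U" for i
    using that by (metis restrict_apply' coeff_diff diff_self)
  ultimately show ?thesis using that[of "c1 - c2"] assms(5) by auto
qed

lemma optimal_LRC_if_dimension_le_twice_locality:
  fixes n k d r \<delta> :: int
  assumes "0 < r" "r < k" "k \<le> 2 * r" "d = n - k - \<delta> + 2"
  shows "optimal_LRC n k d r \<delta>"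
proof -
  have "\<lceil>real_of_int k / real_of_int r\<rceil> = 2"
  proof (rule ceiling_unique)
    show "real_of_int 2 - 1 < real_of_int k / real_of_int r"
      using assms(1,2) by (simp add: field_simps)
    show "real_of_int k / real_of_int r \<le> real_of_int 2"
      using assms(1,3) by (simp add: field_simps)
  qed
  thus ?thesis using assms(4) by (simp add: optimal_LRC_def)
qed

section \<open>The codes \<open>C\<^sub>A\<^sub>B\<close>\<close>

text \<open>The defining sets of the statement are \<open>A = \<zeta> ` IA\<close> and \<open>B = \<zeta> ` IB\<close>.\<close>

locale defining_intervals = primitive_root \<beta> n for \<beta> :: "'a::field" and n :: nat +
  fixes M D N :: nat
  assumes n_eq: "n = 2 * N + 1" and M_pos: "M \<ge> 1" and D_pos: "D \<ge> 1"
    and MD_le: "M + 2 * D \<le> N"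
begin

definition "IA = {- int M..int M - 1} \<union> {int N}"
definition "IB = {- (int D - 1)..int D}"
definition "J1 = {- (int M + int D - 1)..int M + int D - 1}"
definition "J2 = {int N - int D + 1..int N + int D}"

lemma sumset_IA_IB: "{i + j | i j. i \<in> IA \<and> j \<in> IB} = J1 \<union> J2"
proof
  show "{i + j | i j. i \<in> IA \<and> j \<in> IB} \<subseteq> J1 \<union> J2"
    by (auto simp: IA_def IB_def J1_def J2_def)
  have "k \<in> {i + j | i j. i \<in> IA \<and> j \<in> IB}" if "k \<in> J1" for k
  proof -
    consider "- (int D - 1) \<le> k \<and> k \<le> int D" | "k > int D" | "k < - (int D - 1)" by linarith
    thus ?thesis
    proof cases
      case 1
      hence "k = 0 + k" "0 \<in> IA" "k \<in> IB" using M_pos by (auto simp: IA_def IB_def)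
      thus ?thesis by blast
    next
      case 2
      hence "k = (k - int D) + int D" "k - int D \<in> IA" "int D \<in> IB"
        using \<open>k \<in> J1\<close> D_pos by (auto simp: IA_def IB_def J1_def)
      thus ?thesis by blast
    next
      case 3
      hence "k = (k + int D - 1) + (- (int D - 1))" "k + int D - 1 \<in> IA" "- (int D - 1) \<in> IB"
        using \<open>k \<in> J1\<close> D_pos by (auto simp: IA_def IB_def J1_def)
      thus ?thesis by blast
    qed
  qed
  moreover have "k \<in> {i + j | i j. i \<in> IA \<and> j \<in> IB}" if "k \<in> J2" for k
  proof -
    have "k = int N + (k - int N)" "int N \<in> IA" "k - int N \<in> IB"
      using that by (auto simp: IA_def IB_def J2_def)
    thus ?thesis by blast
  qed
  ultimately show "J1 \<union> J2 \<subseteq> {i + j | i j. i \<in> IA \<and> j \<in> IB}" by blast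
qed

lemma set_prod_\<zeta>: "set_prod (\<zeta> ` I) (\<zeta> ` I') = \<zeta> ` {i + j | i j. i \<in> I \<and> j \<in> I'}"
proof
  show "set_prod (\<zeta> ` I) (\<zeta> ` I') \<subseteq> \<zeta> ` {i + j | i j. i \<in> I \<and> j \<in> I'}"
    by (auto simp: set_prod_def \<zeta>_add[symmetric] intro!: image_eqI)
  show "\<zeta> ` {i + j | i j. i \<in> I \<and> j \<in> I'} \<subseteq> set_prod (\<zeta> ` I) (\<zeta> ` I')"
  proof
    fix z assume "z \<in> \<zeta> ` {i + j | i j. i \<in> I \<and> j \<in> I'}"
    then obtain i j where "i \<in> I" "j \<in> I'" "z = \<zeta> i * \<zeta> j" by (auto simp: \<zeta>_add)
    thus "z \<in> set_prod (\<zeta> ` I) (\<zeta> ` I')" unfolding set_prod_def by blast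
  qed
qed

lemma set_prod_A_B: "set_prod (\<zeta> ` IA) (\<zeta> ` IB) = \<zeta> ` (J1 \<union> J2)"
  by (simp add: set_prod_\<zeta> sumset_IA_IB)

lemma card_AB: "card (\<zeta> ` (J1 \<union> J2)) = 2 * M + 4 * D - 1"
proof -
  have "J1 \<union> J2 \<subseteq> {- (int M + int D - 1)..<- (int M + int D - 1) + int n}"
    using n_eq MD_le by (auto simp: J1_def J2_def)
  hence "card (\<zeta> ` (J1 \<union> J2)) = card (J1 \<union> J2)" by (intro card_image inj_on_\<zeta>)
  also have "\<dots> = card J1 + card J2" using MD_le by (intro card_Un_disjoint) (auto simp: J1_def J2_def)
  finally show ?thesis using M_pos by (simp add: J1_def J2_def)
qed

lemma inverse_AB: "z \<in> \<zeta> ` (J1 \<union> J2) \<Longrightarrow> inverse z \<in> \<zeta> ` (J1 \<union> J2)"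
proof -
  assume "z \<in> \<zeta> ` (J1 \<union> J2)"
  then obtain j where j: "j \<in> J1 \<union> J2" "z = \<zeta> j" by blast
  txt \<open>\<open>J1\<close> is symmetric about \<open>0\<close> and \<open>J2\<close> about \<open>n/2\<close>.\<close>
  have "\<exists>j'\<in>J1 \<union> J2. \<zeta> j' = \<zeta> (- j)"
  proof (cases "- j \<in> J1")
    case False
    hence "int n - j \<in> J2" using j(1) n_eq by (auto simp: J1_def J2_def)
    moreover have "\<zeta> (int n - j) = \<zeta> (- j)" by (simp add: \<zeta>_eq_iff)
    ultimately show ?thesis by blast
  qed blast
  thus ?thesis using j(2) by (metis \<zeta>_uminus image_eqI)
qed

lemma \<zeta>_mult_A_neq_1:
  assumes "int M + 1 \<le> j" "j \<le> int N" "a \<in> \<zeta> ` IA"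
  shows "\<zeta> j * a \<noteq> 1"
proof -
  obtain i where i: "i \<in> IA" "a = \<zeta> i" using assms(3) by blast
  hence "0 < j + i" "j + i < int n" using assms(1,2) n_eq MD_le by (auto simp: IA_def)
  hence "\<not> int n dvd j + i" using zdvd_imp_le by fastforce
  thus ?thesis using i(2) by (simp add: \<zeta>_eq_1_iff flip: \<zeta>_add)
qed

end

locale AB_code = defining_intervals \<beta> n M D N for \<beta> :: "'a::{field,finite}" and n M D N +
  fixes q k :: nat
  assumes q_def: "q = CHAR('a) ^ k" and k_pos: "k > 0"
    and card_field: "card (UNIV :: 'a set) = q ^ 2" and n_dvd: "n dvd q + 1"
begin

abbreviation "A \<equiv> \<zeta> ` IA"
abbreviation "Z \<equiv> \<zeta> ` (J1 \<union> J2)"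
abbreviation "C \<equiv> cyclic_code_Fq q n Z"
abbreviation "DA \<equiv> dual_code n (cyclic_code n A)"

definition "dimC = 2 * N + 2 - 2 * M - 4 * D"

lemma q_ge_2: "q \<ge> 2"
  using char_power_ge_2[OF q_def k_pos] .

lemma finite_A: "finite A" by (simp add: IA_def)
lemma finite_Z: "finite Z" by (simp add: J1_def J2_def)
lemma roots_A: "\<forall>a\<in>A. a ^ n = 1" by (simp add: \<zeta>_power_n)
lemma roots_Z: "\<forall>z\<in>Z. z ^ n = 1" by (simp add: \<zeta>_power_n)

lemma frobenius_Z: "(\<lambda>z. z ^ q) ` Z = Z"
proof -
  have "z ^ q = inverse z" if "z \<in> Z" for z
  proof -
    obtain c where c: "q + 1 = n * c" using n_dvd by (elim dvdE)
    have "z * z ^ q = z ^ (q + 1)" by simp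
    also have "\<dots> = (z ^ n) ^ c" by (simp only: c power_mult)
    finally have "z * z ^ q = 1" using roots_Z that by simp
    thus ?thesis by (simp add: inverse_unique)
  qed
  hence "(\<lambda>z. z ^ q) ` Z = inverse ` Z" by (simp cong: image_cong)
  also have "inverse ` Z = Z"
  proof
    show "inverse ` Z \<subseteq> Z" using inverse_AB by blast
    show "Z \<subseteq> inverse ` Z"
    proof
      fix z assume "z \<in> Z"
      thus "z \<in> inverse ` Z" using inverse_AB[of z] by (intro rev_image_eqI[of "inverse z"]) simp_all
    qed
  qed
  finally show ?thesis .
qed

lemma C_eq: "C = {u \<in> cyclic_code n Z. Fq_poly q u}"
  by (rule cyclic_code_Fq_eq[OF q_def Fq_poly_gen_poly[OF q_def finite_Z frobenius_Z]
        finite_Z n_pos roots_Z])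

lemma card_C: "card C = q ^ dimC"
proof -
  have "card Z < n" "n - card Z = dimC"
    using card_AB n_eq MD_le D_pos by (simp_all add: dimC_def)
  thus ?thesis
    using card_cyclic_code_Fq[OF q_def Fq_poly_gen_poly[OF q_def finite_Z frobenius_Z]
        finite_Z n_pos roots_Z] card_Fq[OF q_def k_pos card_field]
    by simp
qed

lemma code_dim_C: "code_dim q C = dimC"
  by (rule code_dim_eqI[OF card_C q_ge_2])

lemma weight_C: "c \<in> C \<Longrightarrow> c \<noteq> 0 \<Longrightarrow> 2 * M + 2 * D - 1 < hweight n c"
proof -
  assume "c \<in> C" "c \<noteq> 0"
  hence c: "degree c < n" "\<forall>z\<in>Z. poly c z = 0"
    using C_eq cyclic_code_eq[OF finite_Z n_pos roots_Z] by auto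
  have "- (int M + int D - 1) + int j \<in> J1" if "j < 2 * M + 2 * D - 1" for j
    using that by (auto simp: J1_def)
  thus ?thesis using c \<open>c \<noteq> 0\<close> by (intro bch_bound[where s = "- (int M + int D - 1)"]) auto
qed

lemma weight_DA: "v \<in> DA \<Longrightarrow> v \<noteq> 0 \<Longrightarrow> N - M < hweight n v"
proof -
  assume v: "v \<in> DA" "v \<noteq> 0"
  have "degree v < n" using v(1) n_pos by (simp add: dual_code_def word_len_iff_degree_less)
  moreover have "poly v (\<zeta> (int M + 1 + int j)) = 0" if "j < N - M" for j
    using that \<zeta>_mult_A_neq_1[of "int M + 1 + int j"]
    by (intro dual_code_eval_eq_0[OF finite_A n_pos roots_A v(1) \<zeta>_power_n]) auto
  ultimately show ?thesis using v(2) by (intro bch_bound[where s = "int M + 1"]) auto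
qed

lemma nonzero_in_DA: "word_of n (\<lambda>i. \<zeta> (int N) ^ i) \<in> DA" "word_of n (\<lambda>i. \<zeta> (int N) ^ i) \<noteq> 0"
  using eval_word_in_dual_code[OF finite_A n_pos roots_A] word_of_power_nonzero[OF n_pos]
  by (auto simp: IA_def)

lemma min_dist_DA_gt: "N - M < min_dist n DA"
proof -
  obtain v where "v \<in> DA" "v \<noteq> 0" "hweight n v = min_dist n DA"
    by (rule min_dist_attained[OF nonzero_in_DA])
  thus ?thesis using weight_DA[of v] by simp
qed

lemma locality_on_supp:
  assumes "v \<in> DA"
  shows "punct_min_dist_ge (supp n v) C (2 * D + 1)"
  unfolding punct_min_dist_ge_def
proof (intro ballI impI)
  fix x assume x: "x \<in> C" "\<exists>i\<in>supp n v. coeff x i \<noteq> 0"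
  have "degree x < n" "\<forall>z\<in>Z. poly x z = 0"
    using x(1) C_eq cyclic_code_eq[OF finite_Z n_pos roots_Z] by auto
  define w where "w = word_of n (\<lambda>i. coeff x i * coeff v i)"
  have supp_w: "supp n w = {i \<in> supp n v. coeff x i \<noteq> 0}"
    by (auto simp: w_def supp_def coeff_word_of)
  hence "supp n w \<noteq> {}" using x(2) by blast
  hence "w \<noteq> 0" by (auto simp: supp_def)
  have "poly w (\<zeta> (- (int D - 1) + int j)) = 0" if "j < 2 * D" for j
    unfolding w_def
  proof (rule hadamard_product_eval_eq_0[OF finite_A n_pos roots_A assms \<open>degree x < n\<close>])
    have "\<zeta> (- (int D - 1) + int j) \<in> \<zeta> ` IB" using that by (auto simp: IB_def)
    hence "a * \<zeta> (- (int D - 1) + int j) \<in> Z" if "a \<in> A" for a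
      using that set_prod_A_B unfolding set_prod_def by blast
    thus "\<forall>a\<in>A. poly x (a * \<zeta> (- (int D - 1) + int j)) = 0"
      using \<open>\<forall>z\<in>Z. poly x z = 0\<close> by blast
  qed
  hence "2 * D < hweight n w"
    using bch_bound[OF _ \<open>w \<noteq> 0\<close>, of "2 * D" "- (int D - 1)"]
    by (simp add: w_def degree_word_of[OF n_pos])
  thus "2 * D + 1 \<le> card {i \<in> supp n v. coeff x i \<noteq> 0}"
    using supp_w by (simp add: hweight_eq_card_supp)
qed

lemma is_LRC_C: "is_LRC n C (int (min_dist n DA) - int (2 * D + 1) + 1) (2 * D + 1)"
proof -
  obtain v where v: "v \<in> DA" "v \<noteq> 0" "hweight n v = min_dist n DA"
    by (rule min_dist_attained[OF nonzero_in_DA])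
  have "degree v < n" using v(1) n_pos by (simp add: dual_code_def word_len_iff_degree_less)
  then obtain j0 where j0: "j0 \<in> supp n v" using supp_nonempty v(2) by blast
  have "has_locality n C (int (min_dist n DA) - int (2 * D + 1) + 1) (2 * D + 1) i"
    if "i < n" for i
  proof -
    txt \<open>Shift \<open>v\<close> cyclically so that its support covers position \<open>i\<close>.\<close>
    define v' where "v' = cyc_shift n ((j0 + n - i) mod n) v"
    have "(i + (j0 + n - i) mod n) mod n = j0"
      using that j0 by (simp add: mod_add_right_eq supp_def)
    hence "i \<in> supp n v'" using that j0 by (simp add: v'_def supp_cyc_shift[OF n_pos])
    moreover have "v' \<in> DA"
      unfolding v'_def using n_pos by (intro cyc_shift_in_dual_code[OF finite_A n_pos roots_A v(1)]) simp
    moreover have "card (supp n v') = min_dist n DA"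
      using v(3) by (simp add: v'_def card_supp_cyc_shift[OF n_pos] hweight_eq_card_supp)
    ultimately show ?thesis
      unfolding has_locality_def using supp_subset locality_on_supp by (intro exI[of _ "supp n v'"]) auto
  qed
  moreover have "int (min_dist n DA) - int (2 * D + 1) + 1 \<ge> 1" using min_dist_DA_gt MD_le by linarith
  ultimately show ?thesis using D_pos by (simp add: is_LRC_def)
qed

lemma vanishes_on_dual_supp:
  assumes "v \<in> DA" "d \<in> C" "S' \<subseteq> supp n v" "card (supp n v - S') \<le> 2 * D"
    and "\<forall>i\<in>S'. coeff d i = 0"
  shows "\<forall>i\<in>supp n v. coeff d i = 0"
proof (rule ccontr)
  assume "\<not> (\<forall>i\<in>supp n v. coeff d i = 0)"
  hence "2 * D + 1 \<le> card {i \<in> supp n v. coeff d i \<noteq> 0}"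
    using locality_on_supp[OF assms(1)] assms(2) by (auto simp: punct_min_dist_ge_def)
  also have "\<dots> \<le> card (supp n v - S')"
    using assms(5) by (intro card_mono) (auto intro: finite_subset[OF supp_subset])
  finally show False using assms(4) by simp
qed

lemma diff_in_C: "c1 \<in> C \<Longrightarrow> c2 \<in> C \<Longrightarrow> c1 - c2 \<in> C"
  by (auto simp: C_eq cyclic_code_eq[OF finite_Z n_pos roots_Z] degree_diff_less
        Fq_poly_diff[OF q_def])

lemma low_weight_word_in_C:
  assumes "min_dist n DA < dimC + 2 * D"
  obtains d where "d \<in> C" "d \<noteq> 0" "hweight n d \<le> 2 * M + 2 * D"
proof -
  obtain v where v: "v \<in> DA" "v \<noteq> 0" "hweight n v = min_dist n DA"
    by (rule min_dist_attained[OF nonzero_in_DA])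
  define S where "S = supp n v"
  have card_S: "card S = min_dist n DA" and S_sub: "S \<subseteq> {..<n}"
    using v(3) supp_subset by (simp_all add: S_def hweight_eq_card_supp)
  have dA_gt: "2 * D < min_dist n DA" using min_dist_DA_gt MD_le by linarith
  txt \<open>Choose \<open>dimC - 1\<close> positions: all of \<open>S\<close> but \<open>2D\<close>, padded outside \<open>S\<close>.\<close>
  obtain S' where S': "S' \<subseteq> S" "card S' = min_dist n DA - 2 * D"
    using obtain_subset_with_card_n[of "min_dist n DA - 2 * D" S] card_S by auto
  have fin_S: "finite S" using S_sub finite_subset by blast
  have "card ({..<n} - S) = n - min_dist n DA" using S_sub card_S fin_S by (simp add: card_Diff_subset)
  moreover have "dimC - 1 - (min_dist n DA - 2 * D) \<le> n - min_dist n DA"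
    using assms dA_gt n_eq MD_le by (simp add: dimC_def)
  ultimately obtain E where E: "E \<subseteq> {..<n} - S" "card E = dimC - 1 - (min_dist n DA - 2 * D)"
    using obtain_subset_with_card_n by (metis le_trans order_refl)
  have "card (S' \<union> E) = dimC - 1"
    using S' E assms dA_gt fin_S by (subst card_Un_disjoint) (auto intro: finite_subset)
  moreover have "dimC \<ge> 2" using MD_le by (simp add: dimC_def)
  ultimately have "card (Fq q :: 'a set) ^ card (S' \<union> E) < card C"
    using card_C card_Fq[OF q_def k_pos card_field] q_ge_2 by (simp add: power_strict_increasing)
  moreover have "finite (S' \<union> E)" using S'(1) E(1) fin_S by (auto intro: finite_subset)
  moreover have "\<forall>c\<in>C. \<forall>i. coeff c i \<in> Fq q" by (simp add: C_eq Fq_poly_def)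
  ultimately obtain d where d: "d \<in> C" "d \<noteq> 0" "\<forall>i\<in>S' \<union> E. coeff d i = 0"
    using exists_nonzero_vanishing_on[of "S' \<union> E" "Fq q" C] diff_in_C by auto
  have "card (S - S') = 2 * D" using S' card_S dA_gt fin_S by (simp add: card_Diff_subset finite_subset)
  hence "\<forall>i\<in>S. coeff d i = 0"
    using vanishes_on_dual_supp[OF v(1) d(1), of S'] S'(1) d(3) by (simp add: S_def)
  hence "supp n d \<subseteq> ({..<n} - S) - E" using d(3) by (auto simp: supp_def)
  hence "hweight n d \<le> card (({..<n} - S) - E)" by (simp add: hweight_eq_card_supp card_mono)
  also have "\<dots> = 2 * M + 2 * D"
    using E \<open>card ({..<n} - S) = n - min_dist n DA\<close> assms dA_gt n_eq MD_le
    by (simp add: card_Diff_subset finite_subset dimC_def)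
  finally show ?thesis using that d(1,2) by blast
qed

lemma min_dist_C:
  assumes "min_dist n DA < dimC + 2 * D"
  shows "min_dist n C = 2 * M + 2 * D"
proof -
  obtain d where "d \<in> C" "d \<noteq> 0" "hweight n d \<le> 2 * M + 2 * D"
    by (rule low_weight_word_in_C[OF assms])
  thus ?thesis using weight_C by (intro min_dist_eqI) fastforce+
qed

lemma optimal_C:
  assumes "min_dist n DA < dimC + 2 * D"
  shows "optimal_LRC (int n) (int dimC) (int (min_dist n C))
           (int (min_dist n DA) - int (2 * D + 1) + 1) (int (2 * D + 1))"
  using min_dist_C[OF assms] min_dist_DA_gt MD_le assms
  by (intro optimal_LRC_if_dimension_le_twice_locality) (simp_all add: dimC_def n_eq)

end

lemma powi_mult_image:
  "{\<alpha> powi (j * int b) | j. lo \<le> j \<and> j \<le> hi} = (\<lambda>j. (\<alpha> ^ b) powi j) ` {lo..hi}"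
  for \<alpha> :: "'a::field"
proof -
  have "\<alpha> powi (j * int b) = (\<alpha> ^ b) powi j" for j
    by (metis power_int_mult power_int_of_nat mult.commute)
  thus ?thesis by auto
qed

theorem corollary5p6:
  fixes \<alpha> :: "'a::{field, finite}"
    and q n m b \<delta> :: nat
  assumes "\<exists>p k. prime p \<and> k > 0 \<and> q = p ^ k"
    and "card (UNIV :: 'a set) = q ^ 2"
    and "odd n" and "n dvd q + 1"
    and "\<alpha> ^ n = 1" and "\<forall>k. 0 < k \<and> k < n \<longrightarrow> \<alpha> ^ k \<noteq> 1"
    and "m > 0" and "even m"
    and "b > 0" and "coprime b n"
    and "odd \<delta>" and "3 \<le> \<delta>" and "2 * int \<delta> \<le> int n - int m + 1"
    and A_def: "A = {\<alpha> powi (j * int b) | j. - (int m div 2) \<le> j \<and> j \<le> (int m - 2) div 2}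
                 \<union> {\<alpha> ^ (((n - 1) div 2) * b)}"
    and B_def: "B = {\<alpha> powi (j * int b) | j. - ((int \<delta> - 3) div 2) \<le> j \<and> j \<le> (int \<delta> - 1) div 2}"
    and dA_def: "dA = min_dist n (dual_code n (cyclic_code n A))"
  shows "is_LRC n (cyclic_code_Fq q n (set_prod A B)) (int dA - int \<delta> + 1) \<delta>
         \<and> int (code_dim q (cyclic_code_Fq q n (set_prod A B))) = int n - int m - 2 * int \<delta> + 3
         \<and> (int \<delta> - 2 < int n - int m - int dA \<longrightarrow>
              optimal_LRC (int n) (int (code_dim q (cyclic_code_Fq q n (set_prod A B))))
                 (int (min_dist n (cyclic_code_Fq q n (set_prod A B)))) (int dA - int \<delta> + 1) (int \<delta>)
            \<and> min_dist n (cyclic_code_Fq q n (set_prod A B)) = m + \<delta> - 1)"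
proof -
  obtain p k where p: "prime p" "k > 0" "q = p ^ k" using assms(1) by blast
  hence "card (UNIV :: 'a set) = p ^ (k * 2)" using assms(2) by (simp add: power_mult)
  hence q: "q = CHAR('a) ^ k"
    using CHAR_eq_if_card_eq_prime_power[where 'a='a, of p "k * 2"] p by simp
  obtain N M D where NMD: "n = 2 * N + 1" "m = 2 * M" "\<delta> = 2 * D + 1"
    using assms(3,8,11) by (metis oddE evenE)
  interpret \<alpha>: primitive_root \<alpha> n using assms(5,6) NMD(1) by unfold_locales auto
  interpret AB_code "\<alpha> ^ b" n M D N q k
    using \<alpha>.power_coprime[OF assms(10)] p(2) q assms(2,4,7,12,13) NMD
    by (intro AB_code.intro defining_intervals.intro) (auto intro: AB_code_axioms.intro
        defining_intervals_axioms.intro)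
  have \<zeta>_eq: "\<zeta> = (\<lambda>j. (\<alpha> ^ b) powi j)" by (simp add: fun_eq_iff \<zeta>_def)
  have "\<alpha> ^ ((n - 1) div 2 * b) = (\<alpha> ^ b) ^ N"
    using NMD(1) by (simp add: power_mult[symmetric] mult.commute)
  moreover have "int m div 2 = int M" "(int m - 2) div 2 = int M - 1"
    "(int \<delta> - 3) div 2 = int D - 1" "(int \<delta> - 1) div 2 = int D"
    using NMD by auto
  ultimately have "A = \<zeta> ` IA" "B = \<zeta> ` IB"
    unfolding A_def B_def by (simp_all only: powi_mult_image)
      (simp_all add: IA_def IB_def image_Un \<zeta>_eq)
  hence "cyclic_code_Fq q n (set_prod A B) = C" "dA = min_dist n DA"
    by (simp_all add: set_prod_A_B dA_def)
  thus ?thesis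
    using is_LRC_C code_dim_C optimal_C min_dist_C NMD MD_le by (auto simp: dimC_def)
qed

end
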